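(* Let $\mu$ be a non-atomic Radon measure on $\mathbb{R}$ and let $w$ be a weight such that $[w]_{A_\infty}<\infty$. Then for every $\varepsilon$ with $0<\varepsilon<\dfrac{1}{4[w]_{A_\infty}-1}$ and every bounded interval $I\subset\mathbb{R}$, \[ \frac{1}{\mu(I)}\int_I w^{1+\varepsilon}\,d\mu \le 2\left(\frac{1}{\mu(I)}\int_I w\,d\mu\right)^{1+\varepsilon}. \]
   Context: A weight is a nonnegative $\mu$-measurable function on $\mathbb{R}$; $w(E)=\int_E w\,d\mu$; averages are over intervals with $0<\mu(I)<\infty$. $M$ denotes the (uncentered) Hardy–Littlewood maximal function with respect to $\mu$: $Mf(x)=\sup_{I\ni x}\frac{1}{\mu(I)}\int_I|f|\,d\mu$, supremum over intervals containing $x$. The Fujii–Wilson constant is \[ [w]_{A_\infty}:=\sup_I \frac{1}{w(I)}\int_I M(w\chi_I)\,d\mu, \] the supremum over all intervals $I$. *)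

theory Defs
  imports "HOL-Analysis.Analysis"
begin

definition enn_powr :: "ennreal \<Rightarrow> real \<Rightarrow> ennreal" where
  "enn_powr x p = (if x = \<infinity> then \<infinity> else ennreal (enn2real x powr p))"

definition avg_intervals :: "real measure \<Rightarrow> real set set" where
  "avg_intervals M = {J. is_interval J \<and> 0 < emeasure M J \<and> emeasure M J < \<infinity>}"

definition maxfun :: "real measure \<Rightarrow> (real \<Rightarrow> real) \<Rightarrow> real \<Rightarrow> ennreal" where
  "maxfun M f x =
     (SUP J \<in> {J \<in> avg_intervals M. x \<in> J}.
        (\<integral>\<^sup>+ y\<in>J. ennreal \<bar>f y\<bar> \<partial>M) / emeasure M J)"

definition wmeas :: "real measure \<Rightarrow> (real \<Rightarrow> real) \<Rightarrow> real set \<Rightarrow> ennreal" where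
  "wmeas M w E = (\<integral>\<^sup>+ x\<in>E. ennreal (w x) \<partial>M)"

text \<open>Fujii-Wilson A_infinity constant (supremum over intervals I with 0 < w(I) < infinity,
  where the ratio is meaningful).\<close>
definition FW_Ainf :: "real measure \<Rightarrow> (real \<Rightarrow> real) \<Rightarrow> ennreal" where
  "FW_Ainf M w =
     (SUP I \<in> {I. is_interval I \<and> 0 < wmeas M w I \<and> wmeas M w I < \<infinity>}.
        (\<integral>\<^sup>+ x\<in>I. maxfun M (\<lambda>y. w y * indicator I y) x \<partial>M) / wmeas M w I)"

end

theory Submission
  imports Defs "HOL-Probability.Distribution_Functions"
begin

text \<open>
  Up to its two null endpoints, \<open>I\<close> is a closed interval \<open>K = [l, r]\<close>. As \<open>\<mu>\<close> has no atoms,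
  the distribution function \<open>F\<close> of \<open>\<mu>\<close> on \<open>K\<close> is continuous, so the quantile bands
  \<open>j 2\<^sup>-\<^sup>k \<mu>(K) \<le> F < (j+1) 2\<^sup>-\<^sup>k \<mu>(K)\<close> form a dyadic grid of intervals whose cells of
  generation \<open>k\<close> all have measure \<open>2\<^sup>-\<^sup>k \<mu>(K)\<close>. Let \<open>g\<close> be the dyadic maximal function of \<open>w\<close> on
  this grid. Stopping at the maximal cells with average above \<open>t \<ge> \<langle>w\<rangle>\<^sub>K\<close> gives the
  Calder\'on--Zygmund estimates
    \<open>\<integral>\<^bsub>g>t\<^esub> w \<le> 2t \<mu>(g>t)\<close>  and  \<open>\<integral>\<^bsub>g>t\<^esub> g \<le> 2[w] t \<mu>(g>t)\<close>,
  the second one by applying the Fujii--Wilson condition on each maximal cell, and differentiation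
  along the grid gives \<open>w \<le> g\<close> almost everywhere. Integrating against \<open>p t\<^sup>p\<^sup>-\<^sup>1 dt\<close> over
  \<open>t \<ge> \<langle>w\<rangle>\<^sub>K\<close> (with \<open>g\<close> truncated to keep everything finite) yields
    \<open>\<integral> g\<^sup>1\<^sup>+\<^sup>p \<le> \<langle>w\<rangle>\<^sup>p [w] w(K) + 2[w]p/(1+p) \<integral> g\<^sup>1\<^sup>+\<^sup>p\<close>  and
    \<open>\<integral> w g\<^sup>p \<le> \<langle>w\<rangle>\<^sup>p w(K) + 2p/(1+p) \<integral> g\<^sup>1\<^sup>+\<^sup>p\<close>.
  For \<open>4[w]p < 1+p\<close>, i.e. \<open>p < 1/(4[w]-1)\<close>, the last term of the first inequality can be
  absorbed, and then \<open>\<integral> w\<^sup>1\<^sup>+\<^sup>p \<le> \<integral> w g\<^sup>p \<le> 2 \<langle>w\<rangle>\<^sup>p w(K)\<close>.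
\<close>

lemma divide_le_imp_le_mult_ennreal:
  fixes a b c :: ennreal
  assumes "b \<noteq> 0" "b \<noteq> top" "a / b \<le> c"
  shows "a \<le> c * b"
proof -
  have "b / b = 1" using assms by (simp add: less_top)
  then have "a = a / b * b" by (simp add: ennreal_divide_times)
  also have "\<dots> \<le> c * b" using assms(3) by (intro mult_right_mono) auto
  finally show ?thesis .
qed

lemma nn_integral_maxfun_le_FW_Ainf:
  assumes "is_interval J" "0 < wmeas M w J" "wmeas M w J < \<infinity>"
  shows "(\<integral>\<^sup>+x\<in>J. maxfun M (\<lambda>y. w y * indicator J y) x \<partial>M) \<le> FW_Ainf M w * wmeas M w J"
proof -
  have "(\<integral>\<^sup>+x\<in>J. maxfun M (\<lambda>y. w y * indicator J y) x \<partial>M) / wmeas M w J \<le> FW_Ainf M w"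
    unfolding FW_Ainf_def by (rule SUP_upper) (use assms in auto)
  then show ?thesis using assms by (intro divide_le_imp_le_mult_ennreal) auto
qed

lemma nn_integral_powr_derivative_below:
  fixes a q y N :: real
  assumes a: "0 < a" and q: "0 < q" and yN: "y \<le> N"
  shows "(\<integral>\<^sup>+t. ennreal (q * t powr (q - 1)) * indicator {a..N} t * indicator {t. t < y} t \<partial>lborel)
      = (if a < y then ennreal (y powr q - a powr q) else 0)"
proof (cases "a < y")
  case True
  have "(\<integral>\<^sup>+t. ennreal (q * t powr (q - 1)) * indicator {a..N} t * indicator {t. t < y} t \<partial>lborel)
      = (\<integral>\<^sup>+t. ennreal (q * t powr (q - 1)) * indicator {a..y} t \<partial>lborel)"
    using AE_lborel_singleton[of y]
    by (intro nn_integral_cong_AE, elim AE_mp, intro AE_I2)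
       (use yN in \<open>auto simp: indicator_def\<close>)
  also have "\<dots> = ennreal (y powr q - a powr q)"
  proof (rule nn_integral_FTC_Icc)
    fix t assume "t \<in> {a..y}"
    then have "0 < t" using a by auto
    then show "((\<lambda>t. t powr q) has_real_derivative q * t powr (q - 1)) (at t)"
      by (rule has_real_derivative_powr)
    show "0 \<le> q * t powr (q - 1)" using q by simp
  qed (use True in auto)
  finally show ?thesis using True by simp
next
  case False
  then have "(\<lambda>t. ennreal (q * t powr (q - 1)) * indicator {a..N} t * indicator {t. t < y} t) = (\<lambda>t. 0)"
    by (auto simp: indicator_def)
  then show ?thesis using False by simp
qed

lemma ennreal_powr_le_layer_cake:
  fixes a p y N :: real
  assumes a: "0 < a" and p: "0 < p" and y: "0 \<le> y" "y \<le> N"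
  shows "ennreal (y powr p) \<le> ennreal (a powr p) +
    (\<integral>\<^sup>+t. ennreal (p * t powr (p - 1)) * indicator {a..N} t * indicator {t. t < y} t \<partial>lborel)"
proof (cases "a < y")
  case True
  have "a powr p \<le> y powr p" using True a p by (intro powr_mono2) auto
  then have "ennreal (y powr p) = ennreal (a powr p) + ennreal (y powr p - a powr p)"
    by (subst ennreal_plus[symmetric]) auto
  then show ?thesis unfolding nn_integral_powr_derivative_below[OF a p y(2)] using True by simp
next
  case False
  then have "y powr p \<le> a powr p" using y p by (intro powr_mono2) auto
  then show ?thesis unfolding nn_integral_powr_derivative_below[OF a p y(2)] using False
    by (simp add: ennreal_leI)
qed

lemma layer_cake_le_ennreal_powr:
  fixes a p y N :: real
  assumes a: "0 < a" and p: "0 < p" and y: "y \<le> N"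
  shows "(\<integral>\<^sup>+t. ennreal ((1 + p) * t powr p) * indicator {a..N} t * indicator {t. t < y} t \<partial>lborel)
     \<le> ennreal (y powr (1 + p))"
  using nn_integral_powr_derivative_below[OF a _ y, of "1 + p"] p by (auto intro!: ennreal_leI)

text \<open>Converts the weight \<open>p t\<^sup>p\<^sup>-\<^sup>1\<close> of the layer-cake formula for \<open>y\<^sup>p\<close>,
  multiplied by the Calder\'on--Zygmund factor \<open>2 C t\<close>, into a multiple of the weight
  \<open>(1+p) t\<^sup>p\<close> for \<open>y\<^sup>1\<^sup>+\<^sup>p\<close>.\<close>
lemma ennreal_layer_weight_eq:
  fixes t p C :: real
  assumes t: "0 < t" and p: "0 < p" and C: "0 \<le> C"
  shows "ennreal (p * t powr (p - 1)) * (ennreal C * ennreal (2 * t))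
       = ennreal (2 * C * p / (1 + p)) * ennreal ((1 + p) * t powr p)"
proof -
  have "t powr (p - 1) * t = t powr p" using t by (simp add: powr_diff field_simps)
  then have "p * t powr (p - 1) * (C * (2 * t)) = 2 * C * p * t powr p"
    by (metis mult.assoc mult.commute)
  also have "\<dots> = 2 * C * p / (1 + p) * ((1 + p) * t powr p)" using p by (simp add: field_simps)
  finally show ?thesis using t p C by (simp add: ennreal_mult[symmetric] mult.assoc)
qed

lemma absorb_layer_bound:
  fixes z u C p :: real
  assumes p: "0 < p" and C: "0 \<le> C" and pC: "4 * C * p < 1 + p" and u: "0 \<le> u"
    and z: "0 \<le> z" "z \<le> u * C + (2 * C * p / (1 + p)) * z"
  shows "u + (2 * p / (1 + p)) * z \<le> 2 * u"
proof -
  define s where "s = 2 * p / (1 + p)"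
  have s: "0 \<le> s" using p by (simp add: s_def)
  have Cs: "C * s * 2 < 1" using pC p by (simp add: s_def divide_less_eq)
  have "(1 - C * s) * z \<le> u * C" using z by (simp add: s_def algebra_simps)
  then have "s * ((1 - C * s) * z) \<le> s * (u * C)" using s by (rule mult_left_mono)
  also have "\<dots> = u * (C * s)" by (simp add: mult_ac)
  also have "\<dots> \<le> u * (1 - C * s)" using u Cs by (intro mult_left_mono) auto
  finally have "(1 - C * s) * (s * z) \<le> (1 - C * s) * u" by (simp add: algebra_simps)
  then have "s * z \<le> u" using Cs by (simp add: mult_le_cancel_left_pos)
  then show ?thesis by (simp add: s_def)
qed

lemma nn_integral_superlevel_measurable:
  fixes N :: "real measure" and y :: "real \<Rightarrow> real" and h :: "real \<Rightarrow> ennreal"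
  assumes N: "sigma_finite_measure N" "sets N = sets borel"
    and [measurable]: "y \<in> borel_measurable borel" "h \<in> borel_measurable borel"
  shows "(\<lambda>t. \<integral>\<^sup>+x. indicator {x. t < y x} x * h x \<partial>N) \<in> borel_measurable borel"
proof -
  interpret sigma_finite_measure N by (rule N(1))
  have "sets ((borel::real measure) \<Otimes>\<^sub>M N) = sets ((borel::real measure) \<Otimes>\<^sub>M (borel::real measure))"
    using N(2) by (intro sets_pair_measure_cong) simp_all
  then have e: "borel_measurable ((borel::real measure) \<Otimes>\<^sub>M N)
      = borel_measurable ((borel::real measure) \<Otimes>\<^sub>M (borel::real measure))"
    by (intro measurable_cong_sets) simp_all
  have "(\<lambda>(t, x). indicator {x. t < y x} x * h x :: ennreal)
      \<in> borel_measurable ((borel::real measure) \<Otimes>\<^sub>M (borel::real measure))"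
    unfolding indicator_def by measurable
  then have "(\<lambda>(t, x). indicator {x. t < y x} x * h x :: ennreal) \<in> borel_measurable (borel \<Otimes>\<^sub>M N)"
    by (subst e)
  then show ?thesis
    using borel_measurable_nn_integral_fst[of "\<lambda>(t, x). indicator {x. t < y x} x * h x" borel] by simp
qed

lemma nn_integral_layer_swap:
  fixes N :: "real measure" and phi :: "real \<Rightarrow> ennreal" and y :: "real \<Rightarrow> real" and h :: "real \<Rightarrow> ennreal"
  assumes N: "sigma_finite_measure N" "sets N = sets borel"
    and [measurable]: "phi \<in> borel_measurable borel" "y \<in> borel_measurable borel" "h \<in> borel_measurable borel"
  shows "(\<integral>\<^sup>+x. (\<integral>\<^sup>+t. phi t * indicator {t. t < y x} t \<partial>lborel) * h x \<partial>N)
       = (\<integral>\<^sup>+t. phi t * (\<integral>\<^sup>+x. indicator {x. t < y x} x * h x \<partial>N) \<partial>lborel)"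
proof -
  interpret pair_sigma_finite lborel N
    unfolding pair_sigma_finite_def using N(1) lborel.sigma_finite_measure_axioms by simp
  have bN: "borel_measurable N = borel_measurable borel"
    using N(2) by (rule measurable_cong_sets) simp
  have "sets (lborel \<Otimes>\<^sub>M N) = sets (lborel \<Otimes>\<^sub>M (borel::real measure))"
    using N(2) by (intro sets_pair_measure_cong) simp_all
  then have e: "borel_measurable (lborel \<Otimes>\<^sub>M N) = borel_measurable (lborel \<Otimes>\<^sub>M (borel::real measure))"
    by (intro measurable_cong_sets) simp_all
  have "(\<lambda>(t, x). phi t * indicator {t. t < y x} t * h x) \<in> borel_measurable (lborel \<Otimes>\<^sub>M (borel::real measure))"
    unfolding indicator_def by measurable
  then have prod: "(\<lambda>(t, x). phi t * indicator {t. t < y x} t * h x) \<in> borel_measurable (lborel \<Otimes>\<^sub>M N)"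
    by (subst e)
  have "(\<integral>\<^sup>+x. (\<integral>\<^sup>+t. phi t * indicator {t. t < y x} t \<partial>lborel) * h x \<partial>N)
      = (\<integral>\<^sup>+x. (\<integral>\<^sup>+t. phi t * indicator {t. t < y x} t * h x \<partial>lborel) \<partial>N)"
    by (intro nn_integral_cong nn_integral_multc[symmetric]) (unfold indicator_def, measurable)
  also have "\<dots> = (\<integral>\<^sup>+t. (\<integral>\<^sup>+x. phi t * indicator {t. t < y x} t * h x \<partial>N) \<partial>lborel)"
    using Fubini'[OF prod] by simp
  also have "\<dots> = (\<integral>\<^sup>+t. (\<integral>\<^sup>+x. phi t * (indicator {x. t < y x} x * h x) \<partial>N) \<partial>lborel)"
    by (intro nn_integral_cong) (simp add: indicator_def)
  also have "\<dots> = (\<integral>\<^sup>+t. phi t * (\<integral>\<^sup>+x. indicator {x. t < y x} x * h x \<partial>N) \<partial>lborel)"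
    by (intro nn_integral_cong nn_integral_cmult) (unfold bN indicator_def, measurable)
  finally show ?thesis .
qed

locale quantile_grid =
  fixes M :: "real measure" and l r :: real
  assumes sets_M: "sets M = sets borel"
    and emeasure_singleton: "\<And>x. emeasure M {x} = 0"
    and l_less_r: "l < r"
    and emeasure_Icc_finite: "emeasure M {l..r} < \<infinity>"
    and emeasure_Icc_pos: "0 < emeasure M {l..r}"
begin

definition "K = {l..r}"
definition "MK = density M (indicator K)"
definition "F = cdf MK"
definition "m = measure M K"

lemma space_M [simp]: "space M = UNIV"
  by (metis sets_M sets_eq_imp_space_eq space_borel)

lemma sets_MK [simp]: "sets MK = sets borel"
  unfolding MK_def using sets_M by simp

lemma borel_measurable_M: "borel_measurable M = borel_measurable borel"
  by (rule measurable_cong_sets[OF sets_M refl])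

lemma borel_measurable_MK: "borel_measurable MK = borel_measurable borel"
  by (rule measurable_cong_sets) simp_all

lemma K_borel [measurable]: "K \<in> sets borel"
  unfolding K_def by simp

lemma closed_K: "closed K"
  unfolding K_def by simp

lemma emeasure_MK: "A \<in> sets borel \<Longrightarrow> emeasure MK A = emeasure M (A \<inter> K)"
  unfolding MK_def using sets_M
  by (simp add: emeasure_density nn_integral_indicator Int_commute flip: indicator_inter_arith)

lemma emeasure_eq_measure_subset_K:
  assumes "A \<in> sets borel" "A \<subseteq> K"
  shows "emeasure M A = ennreal (measure M A)"
proof -
  have "emeasure M A \<le> emeasure M K" using assms sets_M by (intro emeasure_mono) auto
  then show ?thesis using emeasure_Icc_finite
    by (intro emeasure_eq_ennreal_measure) (auto simp: K_def top_unique)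
qed

lemma emeasure_K: "emeasure M K = ennreal m"
  unfolding m_def by (rule emeasure_eq_measure_subset_K) auto

lemma m_pos: "0 < m"
  using emeasure_Icc_pos emeasure_K unfolding K_def by (simp add: ennreal_less_iff m_def)

lemma finite_borel_measure_MK: "finite_borel_measure MK"
proof -
  have "emeasure MK (space MK) = emeasure M K"
    using emeasure_MK[of UNIV] sets_eq_imp_space_eq[OF sets_MK] by simp
  then show ?thesis using emeasure_K
    unfolding finite_borel_measure_def finite_borel_measure_axioms_def
    by (simp add: finite_measureI)
qed

sublocale MK: finite_borel_measure MK
  by (rule finite_borel_measure_MK)

lemma sigma_finite_MK: "sigma_finite_measure MK"
  by unfold_locales

lemma F_eq: "F x = measure M ({..x} \<inter> K)"
  unfolding F_def cdf_def measure_def by (simp add: emeasure_MK)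

lemma F_mono: "x \<le> y \<Longrightarrow> F x \<le> F y"
  unfolding F_def by (rule MK.cdf_nondecreasing)

lemma F_nonneg: "0 \<le> F x"
  by (simp add: F_eq)

lemma isCont_F: "isCont F x"
proof -
  have "emeasure M ({x} \<inter> K) \<le> emeasure M {x}"
    using sets_M by (intro emeasure_mono) auto
  then have "measure MK {x} = 0"
    using emeasure_singleton[of x] emeasure_MK[of "{x}"] by (simp add: measure_def)
  then show ?thesis unfolding F_def by (simp add: MK.isCont_cdf)
qed

lemma continuous_on_F: "continuous_on A F"
  using isCont_F by (intro continuous_at_imp_continuous_on) auto

lemma F_borel [measurable]: "F \<in> borel_measurable borel"
  by (rule borel_measurable_mono) (simp add: mono_def F_mono)

lemma F_left: "F l = 0"
proof -
  have "{..l} \<inter> K = {l}" using l_less_r by (auto simp: K_def)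
  then show ?thesis unfolding F_eq using emeasure_singleton by (simp add: measure_def)
qed

lemma F_right: "F r = m"
proof -
  have "{..r} \<inter> K = K" by (auto simp: K_def)
  then show ?thesis unfolding F_eq m_def by simp
qed

lemma F_diff: "x < y \<Longrightarrow> F y - F x = measure M ({x<..y} \<inter> K)"
  unfolding F_def by (simp add: MK.cdf_diff_eq measure_def emeasure_MK)

text \<open>Since \<open>F\<close> is continuous, it maps the part of \<open>K\<close> below level \<open>t\<close>
  onto \<open>[0, t)\<close> in a measure-preserving way.\<close>
lemma emeasure_F_sublevel:
  assumes t: "0 \<le> t" "t \<le> m"
  shows "emeasure M {x\<in>K. F x < t} = ennreal t"
proof -
  define S where "S = {x\<in>K. t \<le> F x}"
  have "r \<in> S" using l_less_r t F_right by (auto simp: S_def K_def)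
  moreover have "closed S"
    unfolding S_def using closed_K continuous_on_F
    by (simp add: Collect_conj_eq closed_Int closed_Collect_le)
  moreover have bdd: "bdd_below S"
    unfolding S_def K_def by (rule bdd_belowI[of _ l]) auto
  ultimately have qS: "Inf S \<in> S" by (blast intro: closed_contains_Inf)
  define q where "q = Inf S"
  have qK: "l \<le> q" "q \<le> r" and tq: "t \<le> F q" using qS by (auto simp: q_def S_def K_def)
  have below: "{x\<in>K. F x < t} = {l..<q}"
  proof safe
    fix x assume "x \<in> K" "F x < t"
    then show "x \<in> {l..<q}" using F_mono[of q x] tq by (force simp: K_def)
  next
    fix x assume x: "x \<in> {l..<q}"
    then have "x \<notin> S" using cInf_lower[OF _ bdd] by (force simp: q_def)
    then show "x \<in> K" "F x < t" using x qK by (auto simp: S_def K_def)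
  qed
  obtain x where x: "l \<le> x" "x \<le> q" "F x = t"
    using IVT'[of F l t q] F_left t(1) tq qK continuous_on_F by auto
  then have "x \<in> S" using qK by (auto simp: S_def K_def)
  then have "F q = t" using x cInf_lower[OF _ bdd] by (force simp: q_def)
  moreover have "{..q} \<inter> K = {l..q}" using qK by (auto simp: K_def)
  ultimately have "measure M {l..q} = t" by (simp add: F_eq)
  then have "emeasure M {l..q} = ennreal t"
    using emeasure_eq_measure_subset_K[of "{l..q}"] qK by (simp add: K_def)
  moreover have "{l..q} = {l..<q} \<union> {q}" using qK by auto
  then have "emeasure M {l..q} = emeasure M {l..<q} + emeasure M {q}"
    using sets_M by (simp add: plus_emeasure)
  ultimately show ?thesis using emeasure_singleton[of q] below by simp
qed

lemma emeasure_F_level_set: "emeasure M {x\<in>K. F x = c} = 0"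
proof (cases "{x\<in>K. F x = c} = {}")
  case False
  define S where "S = {x\<in>K. F x = c}"
  have "closed S"
    unfolding S_def using closed_K continuous_on_F
    by (simp add: Collect_conj_eq closed_Int closed_Collect_eq)
  moreover have "bdd_below S" "bdd_above S"
    unfolding S_def K_def by (auto intro: bdd_belowI[of _ l] bdd_aboveI[of _ r])
  moreover have "S \<noteq> {}" using False by (simp add: S_def)
  ultimately have "Inf S \<in> S" "Sup S \<in> S"
    by (simp_all add: closed_contains_Inf closed_contains_Sup)
  define p q where "p = Inf S" and "q = Sup S"
  have S_sub: "S \<subseteq> {p..q}"
    using \<open>bdd_below S\<close> \<open>bdd_above S\<close> by (auto simp: p_def q_def intro: cInf_lower cSup_upper)
  have Fpq: "F p = F q" using \<open>Inf S \<in> S\<close> \<open>Sup S \<in> S\<close> by (simp add: p_def q_def S_def)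
  have "emeasure M S \<le> emeasure M ({p} \<union> ({p<..q} \<inter> K))"
    using S_sub sets_M by (intro emeasure_mono) (auto simp: S_def)
  also have "\<dots> \<le> emeasure M {p} + emeasure M ({p<..q} \<inter> K)"
    using sets_M by (intro emeasure_subadditive) auto
  also have "emeasure M ({p<..q} \<inter> K) = ennreal (measure M ({p<..q} \<inter> K))"
    by (rule emeasure_eq_measure_subset_K) auto
  also have "measure M ({p<..q} \<inter> K) = 0"
  proof (cases "p < q")
    case True then show ?thesis using F_diff[of p q] Fpq by simp
  qed simp
  finally show ?thesis using emeasure_singleton[of p] by (simp add: S_def)
qed (simp only: emeasure_empty)

definition "Kcore = {x\<in>K. F x < m}"

lemma Kcore_subset: "Kcore \<subseteq> K"
  unfolding Kcore_def by auto

lemma Kcore_borel [measurable]: "Kcore \<in> sets borel"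
  unfolding Kcore_def by measurable

lemma emeasure_Kcore: "emeasure M Kcore = ennreal m"
  unfolding Kcore_def using emeasure_F_sublevel[of m] m_pos by simp

lemma K_diff_Kcore_null: "K - Kcore \<in> null_sets M"
proof -
  have "emeasure M (K - Kcore) = emeasure M K - emeasure M Kcore"
    using sets_M Kcore_subset emeasure_Kcore by (intro emeasure_Diff) auto
  then show ?thesis using emeasure_Kcore emeasure_K sets_M by (simp add: null_sets_def)
qed

lemma nn_integral_Kcore_eq_K:
  "(\<integral>\<^sup>+x. f x * indicator Kcore x \<partial>M) = (\<integral>\<^sup>+x. f x * indicator K x \<partial>M)"
  using K_diff_Kcore_null Kcore_subset
  by (intro nn_integral_cong_AE, elim AE_I') (auto simp: indicator_def)

lemma nn_integral_MK_indicator: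
  assumes "A \<subseteq> K" "A \<in> sets borel" "h \<in> borel_measurable borel"
  shows "(\<integral>\<^sup>+x. h x * indicator A x \<partial>MK) = (\<integral>\<^sup>+x. h x * indicator A x \<partial>M)"
proof -
  have "indicator K x * (h x * indicator A x) = h x * indicator A x" for x
    using assms(1) by (auto simp: indicator_def)
  then show ?thesis
    unfolding MK_def using assms(2,3) by (subst nn_integral_density) (simp_all add: borel_measurable_M)
qed

text \<open>The dyadic grid of \<open>K\<close> with respect to \<open>\<mu>\<close>: \<open>cell k j\<close> is the set of points
  of \<open>Kcore\<close> whose \<open>\<mu>\<close>-quantile \<open>F x / m\<close> lies in \<open>[j 2\<^sup>-\<^sup>k, (j+1) 2\<^sup>-\<^sup>k)\<close>.
  \<open>Kcore\<close> omits the null set where \<open>F x = m\<close>, which would get the spurious index \<open>2\<^sup>k\<close>.\<close>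
definition "cell_idx k x = nat \<lfloor>F x * 2^k / m\<rfloor>"
definition "cell k j = {x\<in>Kcore. cell_idx k x = j}"

lemma cell_idx_borel [measurable]: "cell_idx k \<in> measurable borel (count_space UNIV)"
  unfolding cell_idx_def by measurable

lemma cell_borel [measurable]: "cell k j \<in> sets borel"
  unfolding cell_def by measurable

lemma cell_idx_mono: "x \<le> y \<Longrightarrow> cell_idx k x \<le> cell_idx k y"
  unfolding cell_idx_def using F_mono[of x y] m_pos
  by (intro nat_mono floor_mono divide_right_mono mult_right_mono) auto

lemma cell_idx_less: "x \<in> Kcore \<Longrightarrow> cell_idx k x < 2^k"
  unfolding cell_idx_def Kcore_def using F_nonneg[of x] m_pos
  by (simp add: nat_less_iff floor_less_iff field_simps)

lemma cell_subset_Kcore: "cell k j \<subseteq> Kcore"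
  unfolding cell_def by auto

lemma cell_subset_K: "cell k j \<subseteq> K"
  using cell_subset_Kcore Kcore_subset by blast

lemma mem_cell_iff: "x \<in> cell k j \<longleftrightarrow> x \<in> Kcore \<and> cell_idx k x = j"
  unfolding cell_def by simp

lemma is_interval_cell: "is_interval (cell k j)"
  unfolding is_interval_1
proof (intro ballI allI impI)
  fix a b x assume a: "a \<in> cell k j" and b: "b \<in> cell k j" and x: "a \<le> x \<and> x \<le> b"
  then have "x \<in> K" using cell_subset_K by (force simp: K_def)
  moreover have "F x < m" using b x F_mono[of x b] by (auto simp: mem_cell_iff Kcore_def)
  moreover have "cell_idx k x = j"
    using a b x cell_idx_mono[of a x k] cell_idx_mono[of x b k] by (auto simp: mem_cell_iff)
  ultimately show "x \<in> cell k j" by (simp add: mem_cell_iff Kcore_def)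
qed

lemma cell_top_le_m:
  assumes "j < 2^k"
  shows "(real j + 1) * (m / 2^k) \<le> m"
proof -
  have "real (j + 1) \<le> real ((2::nat)^k)" using assms by (intro of_nat_mono) simp
  then have "(real j + 1) * (m / 2^k) \<le> 2^k * (m / 2^k)"
    using m_pos by (intro mult_right_mono) auto
  then show ?thesis by simp
qed

lemma cell_eq_F_strip:
  assumes "j < 2^k"
  shows "cell k j = {x\<in>K. F x < (real j + 1) * (m / 2^k)} - {x\<in>K. F x < real j * (m / 2^k)}"
proof -
  note top = cell_top_le_m[OF assms]
  have "cell_idx k x = j \<longleftrightarrow> real j * (m / 2^k) \<le> F x \<and> F x < (real j + 1) * (m / 2^k)" for x
    unfolding cell_idx_def using F_nonneg[of x] m_pos
    by (simp add: nat_eq_iff floor_eq_iff field_simps)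
  then show ?thesis using top unfolding cell_def Kcore_def by force
qed

lemma emeasure_cell:
  assumes j: "j < 2^k"
  shows "emeasure M (cell k j) = ennreal (m / 2^k)"
proof -
  define c where "c = m / 2^k"
  have c: "0 < c" using m_pos by (simp add: c_def)
  have top: "(real j + 1) * c \<le> m" using cell_top_le_m[OF j] by (simp add: c_def)
  have lower: "0 \<le> real j * c" "real j * c \<le> (real j + 1) * c" using c by simp_all
  have "emeasure M (cell k j) = emeasure M {x\<in>K. F x < (real j + 1) * c} - emeasure M {x\<in>K. F x < real j * c}"
    unfolding cell_eq_F_strip[OF j] c_def[symmetric] using sets_M lower top
    by (intro emeasure_Diff) (auto simp: emeasure_F_sublevel)
  also have "\<dots> = ennreal ((real j + 1) * c) - ennreal (real j * c)"
    using lower top by (simp add: emeasure_F_sublevel)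
  also have "\<dots> = ennreal c"
    using c by (subst ennreal_minus) (auto simp: algebra_simps)
  finally show ?thesis by (simp add: c_def)
qed

lemma cell_avg_intervals: "j < 2^k \<Longrightarrow> cell k j \<in> avg_intervals M"
  unfolding avg_intervals_def using emeasure_cell is_interval_cell m_pos by simp

lemma cell_idx_div: "i \<le> k \<Longrightarrow> cell_idx i x = cell_idx k x div 2^(k-i)"
proof -
  assume "i \<le> k"
  define y where "y = F x * 2^k / m"
  have "(2::real)^k = 2^(k-i) * 2^i" using \<open>i \<le> k\<close> by (simp flip: power_add)
  then have "cell_idx i x = nat \<lfloor>y / real_of_int (2^(k-i))\<rfloor>"
    unfolding cell_idx_def y_def by (simp add: field_simps)
  also have "\<dots> = nat (\<lfloor>y\<rfloor> div 2^(k-i))"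
    by (subst floor_divide_real_eq_div) simp_all
  also have "\<dots> = cell_idx k x div 2^(k-i)"
    using F_nonneg[of x] m_pos unfolding cell_idx_def y_def
    by (simp add: nat_div_distrib nat_power_eq)
  finally show ?thesis .
qed

lemma cell_subset_parent: "i \<le> k \<Longrightarrow> cell k j \<subseteq> cell i (j div 2^(k-i))"
  unfolding cell_def using cell_idx_div by auto

lemma cell_idx_close: "cell_idx k x = cell_idx k y \<Longrightarrow> \<bar>F x - F y\<bar> < m / 2^k"
proof -
  assume e: "cell_idx k x = cell_idx k y"
  have "0 \<le> F x * 2^k / m" "0 \<le> F y * 2^k / m" using F_nonneg m_pos by auto
  then have "\<bar>F x * 2^k / m - F y * 2^k / m\<bar> < 1" using e unfolding cell_idx_def by linarith
  moreover have "\<bar>F x * 2^k / m - F y * 2^k / m\<bar> = \<bar>F x - F y\<bar> * (2^k / m)"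
    using m_pos by (simp add: abs_mult flip: left_diff_distrib diff_divide_distrib)
  ultimately show ?thesis using m_pos by (simp add: field_simps)
qed

text \<open>Its union is the disjoint union of the maximal selected cells, i.e.\ of the selected cells
  none of whose ancestors is selected.\<close>
definition "selected_union P = {x\<in>Kcore. \<exists>k. P k (cell_idx k x)}"
definition "maximal_selected P k = {j. j < 2^k \<and> P k j \<and> (\<forall>i<k. \<not> P i (j div 2^(k-i)))}"

lemma selected_union_borel [measurable]: "selected_union P \<in> sets borel"
proof -
  have "{x. P k (cell_idx k x)} \<in> sets borel" for k
    using measurable_sets[OF cell_idx_borel[of k], of "{j. P k j}"] by (simp add: vimage_def)
  moreover have "selected_union P = Kcore \<inter> (\<Union>k. {x. P k (cell_idx k x)})"
    unfolding selected_union_def by auto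
  ultimately show ?thesis by auto
qed

lemma indicator_selected_union:
  fixes h :: "real \<Rightarrow> ennreal"
  assumes "x \<in> Kcore"
  shows "h x * indicator (selected_union P) x = (\<Sum>k. \<Sum>j\<in>maximal_selected P k. h x * indicator (cell k j) x)"
proof -
  have sum_k: "(\<Sum>j\<in>maximal_selected P k. h x * indicator (cell k j) x)
      = (if P k (cell_idx k x) \<and> (\<forall>i<k. \<not> P i (cell_idx i x)) then h x else 0)" for k
  proof -
    have "cell_idx k x div 2^(k-i) = cell_idx i x" if "i < k" for i using cell_idx_div[of i k x] that by simp
    then have "cell_idx k x \<in> maximal_selected P k \<longleftrightarrow> P k (cell_idx k x) \<and> (\<forall>i<k. \<not> P i (cell_idx i x))"
      unfolding maximal_selected_def using cell_idx_less[OF assms] by auto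
    moreover have "finite (maximal_selected P k)" unfolding maximal_selected_def by auto
    moreover have "h x * indicator (cell k j) x = (if j = cell_idx k x then h x else 0)" for j
      using assms by (auto simp: mem_cell_iff)
    ultimately show ?thesis by (simp add: sum.delta')
  qed
  show ?thesis
  proof (cases "\<exists>k. P k (cell_idx k x)")
    case False
    then show ?thesis unfolding sum_k by (simp add: selected_union_def)
  next
    case True
    define k0 where "k0 = (LEAST k. P k (cell_idx k x))"
    have first: "P k (cell_idx k x) \<and> (\<forall>i<k. \<not> P i (cell_idx i x)) \<longleftrightarrow> k = k0" for k
      unfolding k0_def using True
      by (metis (mono_tags, lifting) LeastI_ex Least_le linorder_not_less not_less_Least order.antisym)
    have "(\<Sum>k. \<Sum>j\<in>maximal_selected P k. h x * indicator (cell k j) x) = (\<Sum>k. if k = k0 then h x else 0)"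
      unfolding sum_k first ..
    also have "\<dots> = h x" by (subst suminf_finite[of "{k0}"]) auto
    finally show ?thesis using True assms by (simp add: selected_union_def)
  qed
qed

lemma nn_integral_selected_union:
  fixes h :: "real \<Rightarrow> ennreal"
  assumes h: "h \<in> borel_measurable borel"
  shows "(\<integral>\<^sup>+x. h x * indicator (selected_union P) x \<partial>M)
     = (\<Sum>k. \<Sum>j\<in>maximal_selected P k. \<integral>\<^sup>+x. h x * indicator (cell k j) x \<partial>M)"
proof -
  have "h x * indicator (selected_union P) x = (\<Sum>k. \<Sum>j\<in>maximal_selected P k. h x * indicator (cell k j) x)" for x
  proof (cases "x \<in> Kcore")
    case False
    then show ?thesis by (simp add: selected_union_def mem_cell_iff)
  qed (rule indicator_selected_union)
  then have "(\<integral>\<^sup>+x. h x * indicator (selected_union P) x \<partial>M)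
      = (\<integral>\<^sup>+x. (\<Sum>k. \<Sum>j\<in>maximal_selected P k. h x * indicator (cell k j) x) \<partial>M)"
    by simp
  also have "\<dots> = (\<Sum>k. \<integral>\<^sup>+x. (\<Sum>j\<in>maximal_selected P k. h x * indicator (cell k j) x) \<partial>M)"
    using h by (intro nn_integral_suminf) (auto simp: borel_measurable_M)
  also have "\<dots> = (\<Sum>k. \<Sum>j\<in>maximal_selected P k. \<integral>\<^sup>+x. h x * indicator (cell k j) x \<partial>M)"
    using h by (subst nn_integral_sum) (auto simp: borel_measurable_M)
  finally show ?thesis .
qed

lemma nn_integral_selected_union_mono:
  assumes "h \<in> borel_measurable borel" "q \<in> borel_measurable borel"
    and "\<And>k j. j \<in> maximal_selected P k \<Longrightarrow>
      (\<integral>\<^sup>+x. h x * indicator (cell k j) x \<partial>M) \<le> (\<integral>\<^sup>+x. q x * indicator (cell k j) x \<partial>M)"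
  shows "(\<integral>\<^sup>+x. h x * indicator (selected_union P) x \<partial>M)
      \<le> (\<integral>\<^sup>+x. q x * indicator (selected_union P) x \<partial>M)"
  unfolding nn_integral_selected_union[OF assms(1)] nn_integral_selected_union[OF assms(2)]
  by (intro suminf_le sum_mono summableI) (use assms(3) in auto)

text \<open>Off this null set \<open>F\<close> is strictly increasing at each point, so the grid cells
  containing a point shrink to it.\<close>
definition "rational_levels = F -` F ` \<rat>"

lemma rational_levels_null: "rational_levels \<inter> K \<in> null_sets M"
proof -
  have "rational_levels \<inter> K = (\<Union>q\<in>\<rat>. {x\<in>K. F x = F q})"
    unfolding rational_levels_def by auto
  moreover have "{x\<in>K. F x = F q} \<in> null_sets M" for q
    using emeasure_F_level_set[of "F q"] sets_M by (simp add: null_sets_def)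
  ultimately show ?thesis by (simp add: null_sets_UN' countable_rat)
qed

lemma cell_shrinks:
  assumes x: "x \<in> Kcore" "x \<notin> rational_levels" and d: "0 < d"
  shows "\<exists>k. cell k (cell_idx k x) \<subseteq> ball x d"
proof -
  have strict: "F a < F b" if "a < b" "a \<le> x" "x \<le> b" for a b
  proof (rule ccontr)
    assume "\<not> F a < F b"
    then have flat: "F a = F b" using F_mono[of a b] that by simp
    obtain q where q: "q \<in> \<rat>" "a < q" "q < b" using Rats_dense_in_real[OF \<open>a < b\<close>] by auto
    have "F q = F x"
      using F_mono[of a q] F_mono[of q b] F_mono[of a x] F_mono[of x b] q that flat by simp
    then show False using x q(1) by (auto simp: rational_levels_def image_iff)
  qed
  define e where "e = min (F (x + d) - F x) (F x - F (x - d))"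
  have e: "0 < e" using strict[of x "x + d"] strict[of "x - d" x] d by (simp add: e_def)
  obtain k :: nat where "m / e < 2^k" using real_arch_pow[of 2 "m / e"] by auto
  then have mk: "m / 2^k < e" using e by (simp add: field_simps)
  have "y \<in> ball x d" if "y \<in> cell k (cell_idx k x)" for y
  proof -
    have "\<bar>F y - F x\<bar> < e" using cell_idx_close[of k y x] mk that by (simp add: mem_cell_iff)
    then have "\<not> x + d \<le> y" "\<not> y \<le> x - d" using F_mono e_def by force+
    then show ?thesis by (auto simp: dist_real_def)
  qed
  then show ?thesis by blast
qed

end

locale weighted_quantile_grid = quantile_grid +
  fixes w :: "real \<Rightarrow> real"
  assumes w_measurable: "w \<in> borel_measurable M"
    and w_nonneg: "\<And>x. 0 \<le> w x"
begin

lemma w_borel [measurable]: "w \<in> borel_measurable borel"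
  using w_measurable by (simp only: borel_measurable_M)

definition "avg k j = wmeas M w (cell k j) / ennreal (m / 2^k)"

definition "dmax x = (SUP k. avg k (cell_idx k x))"

lemma dmax_borel [measurable]: "dmax \<in> borel_measurable borel"
proof -
  have "(\<lambda>x. avg k (cell_idx k x)) \<in> borel_measurable borel" for k
    using measurable_compose[OF cell_idx_borel[of k]] by simp
  then show ?thesis unfolding dmax_def by (intro borel_measurable_SUP) auto
qed

lemma avg_le_maxfun:
  assumes "j < 2^k" "x \<in> cell k j" "cell k j \<subseteq> J"
  shows "avg k j \<le> maxfun M (\<lambda>y. w y * indicator J y) x"
  unfolding maxfun_def
proof (rule SUP_upper2[of "cell k j"])
  show "cell k j \<in> {J \<in> avg_intervals M. x \<in> J}" using cell_avg_intervals[OF assms(1)] assms(2) by simp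
  have "(\<integral>\<^sup>+ y\<in>cell k j. ennreal \<bar>w y * indicator J y\<bar> \<partial>M) = wmeas M w (cell k j)"
    unfolding wmeas_def using assms(3) w_nonneg
    by (intro nn_integral_cong) (auto simp: indicator_def)
  then show "avg k j \<le> (\<integral>\<^sup>+ y\<in>cell k j. ennreal \<bar>w y * indicator J y\<bar> \<partial>M) / emeasure M (cell k j)"
    unfolding emeasure_cell[OF assms(1)] avg_def by simp
qed

lemma dmax_le_maxfun: "x \<in> Kcore \<Longrightarrow> dmax x \<le> maxfun M (\<lambda>y. w y * indicator K y) x"
  unfolding dmax_def
  by (intro SUP_least avg_le_maxfun cell_idx_less cell_subset_K) (auto simp: mem_cell_iff)

lemma wmeas_mono: "A \<subseteq> B \<Longrightarrow> wmeas M w A \<le> wmeas M w B"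
  unfolding wmeas_def by (intro nn_integral_mono mult_left_mono) (auto simp: indicator_def)

lemma wmeas_Kcore: "wmeas M w Kcore = wmeas M w K"
  unfolding wmeas_def by (rule nn_integral_Kcore_eq_K)

lemma avg_root: "avg 0 0 = wmeas M w K / ennreal m"
proof -
  have "cell 0 0 = Kcore" using cell_idx_less[of _ 0] by (auto simp: mem_cell_iff)
  then show ?thesis unfolding avg_def by (simp add: wmeas_Kcore)
qed

lemma wmeas_le_of_avg_le:
  assumes "avg k j \<le> ennreal t" "0 \<le> t"
  shows "wmeas M w (cell k j) \<le> ennreal (t * (m / 2^k))"
proof -
  have "wmeas M w (cell k j) \<le> ennreal t * ennreal (m / 2^k)"
    using assms(1) m_pos unfolding avg_def by (intro divide_le_imp_le_mult_ennreal) auto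
  then show ?thesis using ennreal_mult[of t "m / 2^k"] assms(2) m_pos by simp
qed

abbreviation (input) "avg_exceeds t \<equiv> \<lambda>k j. ennreal t < avg k j"

lemma selected_union_avg_exceeds: "selected_union (avg_exceeds t) = {x\<in>Kcore. ennreal t < dmax x}"
  unfolding selected_union_def dmax_def by (simp add: less_SUP_iff)

lemma wmeas_maximal_cell_le:
  assumes root: "avg 0 0 \<le> ennreal t" and t: "0 \<le> t"
    and j: "j \<in> maximal_selected (avg_exceeds t) k"
  shows "wmeas M w (cell k j) \<le> ennreal (2 * t) * emeasure M (cell k j)"
proof (cases k)
  case 0
  then show ?thesis using j root by (auto simp: maximal_selected_def)
next
  case (Suc k')
  have "avg k' (j div 2) \<le> ennreal t" using j Suc by (auto simp: maximal_selected_def not_less)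
  then have "wmeas M w (cell k' (j div 2)) \<le> ennreal (t * (m / 2^k'))"
    using t by (rule wmeas_le_of_avg_le)
  moreover have "wmeas M w (cell k j) \<le> wmeas M w (cell k' (j div 2))"
    using cell_subset_parent[of k' k j] Suc by (intro wmeas_mono) simp
  moreover have "ennreal (t * (m / 2^k')) = ennreal (2 * t) * emeasure M (cell k j)"
    using j t m_pos Suc by (simp add: emeasure_cell maximal_selected_def ennreal_mult[symmetric])
  ultimately show ?thesis by simp
qed

lemma nn_integral_w_superlevel_le:
  assumes root: "avg 0 0 \<le> ennreal t" and t: "0 \<le> t"
  shows "(\<integral>\<^sup>+x. ennreal (w x) * indicator {x\<in>Kcore. ennreal t < dmax x} x \<partial>M)
     \<le> ennreal (2 * t) * emeasure M {x\<in>Kcore. ennreal t < dmax x}"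
proof -
  have "(\<integral>\<^sup>+x. ennreal (w x) * indicator (selected_union (avg_exceeds t)) x \<partial>M)
      \<le> (\<integral>\<^sup>+x. ennreal (2 * t) * indicator (selected_union (avg_exceeds t)) x \<partial>M)"
  proof (rule nn_integral_selected_union_mono)
    fix k j assume "j \<in> maximal_selected (avg_exceeds t) k"
    then show "(\<integral>\<^sup>+x. ennreal (w x) * indicator (cell k j) x \<partial>M) \<le> (\<integral>\<^sup>+x. ennreal (2 * t) * indicator (cell k j) x \<partial>M)"
      using wmeas_maximal_cell_le[OF root t] sets_M by (simp add: wmeas_def nn_integral_cmult_indicator)
  qed simp_all
  then show ?thesis unfolding selected_union_avg_exceeds using sets_M by (simp add: nn_integral_cmult_indicator)
qed

text \<open>On a maximal stopping cell the ancestors have small averages, and the descendants are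
  subintervals of the cell, so \<open>dmax\<close> is controlled by the maximal function of \<open>w\<close> localised
  to the cell.\<close>
lemma dmax_le_maxfun_maximal_cell:
  assumes j: "j \<in> maximal_selected (avg_exceeds t) k" and x: "x \<in> cell k j"
  shows "dmax x \<le> maxfun M (\<lambda>y. w y * indicator (cell k j) y) x"
  unfolding dmax_def
proof (rule SUP_least)
  fix i
  have xK: "x \<in> Kcore" and ix: "cell_idx k x = j" using x by (auto simp: mem_cell_iff)
  have top: "avg k j \<le> maxfun M (\<lambda>y. w y * indicator (cell k j) y) x"
    using j x by (intro avg_le_maxfun) (auto simp: maximal_selected_def)
  show "avg i (cell_idx i x) \<le> maxfun M (\<lambda>y. w y * indicator (cell k j) y) x"
  proof (cases "i < k")
    case True
    then have "avg i (cell_idx i x) \<le> ennreal t"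
      using j cell_idx_div[of i k x] ix by (auto simp: maximal_selected_def not_less)
    also have "\<dots> \<le> avg k j" using j by (simp add: maximal_selected_def less_imp_le)
    finally show ?thesis using top by simp
  next
    case False
    then have "cell i (cell_idx i x) \<subseteq> cell k j"
      using cell_subset_parent[of k i "cell_idx i x"] cell_idx_div[of k i x] ix by simp
    then show ?thesis using cell_idx_less[OF xK] xK by (intro avg_le_maxfun) (auto simp: mem_cell_iff)
  qed
qed

lemma nn_integral_dmax_superlevel_le:
  assumes root: "avg 0 0 \<le> ennreal t" and t: "0 \<le> t" and fin: "wmeas M w K < \<infinity>"
  shows "(\<integral>\<^sup>+x. dmax x * indicator {x\<in>Kcore. ennreal t < dmax x} x \<partial>M)
     \<le> FW_Ainf M w * ennreal (2 * t) * emeasure M {x\<in>Kcore. ennreal t < dmax x}"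
proof -
  have "(\<integral>\<^sup>+x. dmax x * indicator (selected_union (avg_exceeds t)) x \<partial>M)
      \<le> (\<integral>\<^sup>+x. (FW_Ainf M w * ennreal (2 * t)) * indicator (selected_union (avg_exceeds t)) x \<partial>M)"
  proof (rule nn_integral_selected_union_mono)
    fix k j assume j: "j \<in> maximal_selected (avg_exceeds t) k"
    let ?J = "cell k j"
    have pos: "0 < wmeas M w ?J"
      using j by (cases "wmeas M w ?J = 0") (auto simp: maximal_selected_def avg_def zero_less_iff_neq_zero)
    have "wmeas M w ?J < \<infinity>"
      using wmeas_mono[OF cell_subset_K[of k j]] fin by (simp add: top_unique)
    have "(\<integral>\<^sup>+x. dmax x * indicator ?J x \<partial>M) \<le> (\<integral>\<^sup>+x\<in>?J. maxfun M (\<lambda>y. w y * indicator ?J y) x \<partial>M)"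
      using dmax_le_maxfun_maximal_cell[OF j]
      by (intro nn_integral_mono) (simp add: indicator_def)
    also have "\<dots> \<le> FW_Ainf M w * wmeas M w ?J"
      using pos \<open>wmeas M w ?J < \<infinity>\<close> by (intro nn_integral_maxfun_le_FW_Ainf is_interval_cell)
    also have "\<dots> \<le> FW_Ainf M w * (ennreal (2 * t) * emeasure M ?J)"
      by (intro mult_left_mono wmeas_maximal_cell_le[OF root t j]) simp
    also have "\<dots> = (\<integral>\<^sup>+x. (FW_Ainf M w * ennreal (2 * t)) * indicator ?J x \<partial>M)"
      using sets_M by (subst nn_integral_cmult_indicator) (simp_all add: mult.assoc)
    finally show "(\<integral>\<^sup>+x. dmax x * indicator ?J x \<partial>M) \<le> (\<integral>\<^sup>+x. (FW_Ainf M w * ennreal (2 * t)) * indicator ?J x \<partial>M)" .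
  qed simp_all
  then show ?thesis unfolding selected_union_avg_exceeds using sets_M by (simp add: nn_integral_cmult_indicator)
qed

lemma wmeas_selected_union_le:
  assumes sel: "\<And>k j. P k j \<Longrightarrow> \<exists>y\<in>cell k j. dmax y \<le> ennreal t" and t: "0 \<le> t"
  shows "wmeas M w (selected_union P) \<le> ennreal t * emeasure M (selected_union P)"
proof -
  have "wmeas M w (selected_union P) \<le> (\<integral>\<^sup>+x. ennreal t * indicator (selected_union P) x \<partial>M)"
    unfolding wmeas_def
  proof (rule nn_integral_selected_union_mono)
    fix k j assume j: "j \<in> maximal_selected P k"
    then have "P k j" by (simp add: maximal_selected_def)
    then obtain y where y: "y \<in> cell k j" "dmax y \<le> ennreal t" using sel by blast
    have "avg k j \<le> dmax y"
      unfolding dmax_def using y by (intro SUP_upper2[of k]) (auto simp: mem_cell_iff)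
    with y have "wmeas M w (cell k j) \<le> ennreal (t * (m / 2^k))"
      using t by (intro wmeas_le_of_avg_le) auto
    then show "(\<integral>\<^sup>+x. ennreal (w x) * indicator (cell k j) x \<partial>M) \<le> (\<integral>\<^sup>+x. ennreal t * indicator (cell k j) x \<partial>M)"
      using j t m_pos sets_M ennreal_mult[of t "m / 2^k"]
      by (simp add: wmeas_def nn_integral_cmult_indicator emeasure_cell maximal_selected_def)
  qed simp_all
  then show ?thesis using sets_M by (simp add: nn_integral_cmult_indicator)
qed

lemma wmeas_le_open_cover:
  assumes S: "S \<subseteq> Kcore" "\<And>x. x \<in> S \<Longrightarrow> dmax x \<le> ennreal t" and t: "0 \<le> t"
    and V: "open V" "S \<subseteq> V"
  shows "wmeas M w S \<le> ennreal t * emeasure M (V \<inter> K)"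
proof -
  define P where "P = (\<lambda>k j. cell k j \<subseteq> V \<and> cell k j \<inter> S \<noteq> {})"
  have S_sub: "x \<in> selected_union P" if xS: "x \<in> S" and xr: "x \<notin> rational_levels" for x
  proof -
    have xK: "x \<in> Kcore" using xS S by blast
    have "x \<in> V" using xS V by blast
    then obtain d where "0 < d" "ball x d \<subseteq> V" using V(1) openE by blast
    moreover obtain k where "cell k (cell_idx k x) \<subseteq> ball x d"
      using cell_shrinks[OF xK xr \<open>0 < d\<close>] by blast
    moreover have "x \<in> cell k (cell_idx k x)" using xK by (simp add: mem_cell_iff)
    ultimately have "P k (cell_idx k x)" using xS by (auto simp: P_def)
    then show ?thesis using xK by (auto simp: selected_union_def)
  qed
  have "wmeas M w S \<le> wmeas M w (selected_union P)"
    unfolding wmeas_def using rational_levels_null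
  proof (intro nn_integral_mono_AE, elim AE_I')
    show "{x \<in> space M. \<not> ennreal (w x) * indicator S x \<le> ennreal (w x) * indicator (selected_union P) x}
        \<subseteq> rational_levels \<inter> K"
    proof
      fix x assume "x \<in> {x \<in> space M. \<not> ennreal (w x) * indicator S x \<le> ennreal (w x) * indicator (selected_union P) x}"
      then have "x \<in> S \<and> x \<notin> selected_union P"
        by (cases "x \<in> S"; cases "x \<in> selected_union P") (auto simp: indicator_def)
      then show "x \<in> rational_levels \<inter> K" using S_sub S(1) Kcore_subset by blast
    qed
  qed
  also have "\<dots> \<le> ennreal t * emeasure M (selected_union P)"
    using S(2) t by (intro wmeas_selected_union_le) (auto simp: P_def)
  also have "\<dots> \<le> ennreal t * emeasure M (V \<inter> K)"
  proof -
    have "selected_union P \<subseteq> V \<inter> K"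
    proof
      fix x assume "x \<in> selected_union P"
      then obtain k where "x \<in> Kcore" "P k (cell_idx k x)" by (auto simp: selected_union_def)
      moreover from this have "x \<in> cell k (cell_idx k x)" by (simp add: mem_cell_iff)
      ultimately show "x \<in> V \<inter> K" using Kcore_subset by (auto simp: P_def)
    qed
    then show ?thesis using sets_M V(1) by (intro mult_left_mono emeasure_mono) auto
  qed
  finally show ?thesis .
qed

text \<open>Outer regularity of the finite Borel measure \<open>\<mu>\<close> on \<open>K\<close> removes the open cover.\<close>
lemma wmeas_le_sublevel:
  assumes S: "S \<in> sets borel" "S \<subseteq> Kcore" "\<And>x. x \<in> S \<Longrightarrow> dmax x \<le> ennreal t" and t: "0 \<le> t"
  shows "wmeas M w S \<le> ennreal t * emeasure M S"
proof (rule ennreal_le_epsilon)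
  fix e :: real assume e: "0 < e"
  have SK: "S \<subseteq> K" using S(2) Kcore_subset by blast
  have S_MK: "emeasure MK S = emeasure M S"
    using emeasure_MK[OF S(1)] SK by (simp add: Int_absorb2)
  define eta where "eta = e / (t + 1)"
  have eta: "0 < eta" "t * eta \<le> e"
    using e t by (auto simp: eta_def field_simps)
  obtain s where s: "emeasure M S = ennreal s" "0 \<le> s"
    using emeasure_eq_measure_subset_K[OF S(1) SK] by simp
  have "emeasure MK S = (INF U\<in>{U. S \<subseteq> U \<and> open U}. emeasure MK U)"
    using S(1) by (intro outer_regular) (simp_all add: MK.emeasure_finite)
  moreover have "emeasure MK S < ennreal (s + eta)"
    using S_MK s eta by (simp add: ennreal_lessI)
  ultimately obtain V where V: "S \<subseteq> V" "open V" "emeasure MK V < ennreal (s + eta)"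
    by (auto simp: INF_less_iff)
  have "wmeas M w S \<le> ennreal t * emeasure M (V \<inter> K)"
    using S V t by (intro wmeas_le_open_cover) auto
  also have "emeasure M (V \<inter> K) = emeasure MK V"
    using V(2) by (simp add: emeasure_MK)
  also have "ennreal t * emeasure MK V \<le> ennreal t * ennreal (s + eta)"
    using V(3) by (intro mult_left_mono) auto
  also have "\<dots> = ennreal t * emeasure M S + ennreal (t * eta)"
    using t s eta by (simp add: ennreal_mult ennreal_plus distrib_left)
  also have "\<dots> \<le> ennreal t * emeasure M S + ennreal e"
    using eta by (intro add_left_mono ennreal_leI) simp
  finally show "wmeas M w S \<le> ennreal t * emeasure M S + ennreal e" .
qed

lemma emeasure_dmax_le_less_w:
  assumes t: "0 \<le> t" "t < t'"
  shows "emeasure M {x\<in>Kcore. dmax x \<le> ennreal t \<and> t' < w x} = 0"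
proof -
  define S where "S = {x\<in>Kcore. dmax x \<le> ennreal t \<and> t' < w x}"
  have S_borel: "S \<in> sets borel" unfolding S_def by measurable
  have SK: "S \<subseteq> K" using Kcore_subset by (auto simp: S_def)
  obtain s where s: "emeasure M S = ennreal s" "0 \<le> s"
    using emeasure_eq_measure_subset_K[OF S_borel SK] by simp
  have "ennreal (t' * s) = (\<integral>\<^sup>+x. ennreal t' * indicator S x \<partial>M)"
    using s t sets_M S_borel by (simp add: nn_integral_cmult_indicator ennreal_mult)
  also have "\<dots> \<le> wmeas M w S"
    unfolding wmeas_def by (intro nn_integral_mono) (auto simp: S_def indicator_def intro!: ennreal_leI)
  also have "\<dots> \<le> ennreal t * emeasure M S"
    using S_borel t by (intro wmeas_le_sublevel) (auto simp: S_def)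
  also have "\<dots> = ennreal (t * s)"
    using s t by (simp add: ennreal_mult)
  finally have "t' * s \<le> t * s"
    using s t by (subst (asm) ennreal_le_iff) auto
  then have "s = 0" using t s by (simp add: mult_le_cancel_right)
  then show ?thesis using s by (simp add: S_def)
qed
lemma w_le_dmax_AE: "AE x in M. x \<in> Kcore \<longrightarrow> ennreal (w x) \<le> dmax x"
proof -
  define N where "N = (\<Union>p\<in>{p :: rat \<times> rat. 0 < fst p \<and> fst p < snd p}.
      {x\<in>Kcore. dmax x \<le> ennreal (real_of_rat (fst p)) \<and> real_of_rat (snd p) < w x})"
  have "N \<in> null_sets M"
    unfolding N_def
  proof (rule null_sets_UN')
    fix p :: "rat \<times> rat" assume "p \<in> {p. 0 < fst p \<and> fst p < snd p}"
    then show "{x\<in>Kcore. dmax x \<le> ennreal (real_of_rat (fst p)) \<and> real_of_rat (snd p) < w x} \<in> null_sets M"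
      using emeasure_dmax_le_less_w[of "real_of_rat (fst p)" "real_of_rat (snd p)"] sets_M
      by (auto simp: null_sets_def of_rat_less zero_less_of_rat_iff)
  qed (rule countable_subset[OF subset_UNIV countableI_type])
  then show ?thesis
  proof (rule AE_I')
    show "{x \<in> space M. \<not> (x \<in> Kcore \<longrightarrow> ennreal (w x) \<le> dmax x)} \<subseteq> N"
    proof
      fix x assume "x \<in> {x \<in> space M. \<not> (x \<in> Kcore \<longrightarrow> ennreal (w x) \<le> dmax x)}"
      then have x: "x \<in> Kcore" "\<not> ennreal (w x) \<le> dmax x" by auto
      then obtain s where s: "dmax x = ennreal s" "0 \<le> s" "s < w x"
        by (cases "dmax x") (auto simp: ennreal_less_iff w_nonneg)
      obtain a where a: "s < real_of_rat a" "real_of_rat a < w x"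
        using Rats_dense_in_real[OF s(3)] by (auto elim: Rats_cases)
      obtain b where b: "real_of_rat a < real_of_rat b" "real_of_rat b < w x"
        using Rats_dense_in_real[OF a(2)] by (auto elim: Rats_cases)
      have "0 < real_of_rat a" using a s by linarith
      then have "0 < a" "a < b" using b by (simp_all add: of_rat_less zero_less_of_rat_iff)
      moreover have "dmax x \<le> ennreal (real_of_rat a)" using s a by (simp add: ennreal_leI)
      ultimately show "x \<in> N" unfolding N_def using x b
        by (intro UN_I[of "(a, b)"]) auto
    qed
  qed
qed

text \<open>Truncating \<open>dmax\<close> at height \<open>N\<close> keeps all layer-cake integrals finite, which is
  what makes the absorption argument legitimate.\<close>
definition "dmax_trunc N x = enn2real (min (dmax x) (ennreal N))"

definition "trunc_superlevel N t = (\<integral>\<^sup>+x. indicator {x. t < dmax_trunc N x} x * indicator Kcore x \<partial>MK)"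

lemma dmax_trunc_borel [measurable]: "dmax_trunc N \<in> borel_measurable borel"
  unfolding dmax_trunc_def by measurable

lemma dmax_trunc_nonneg: "0 \<le> dmax_trunc N x"
  unfolding dmax_trunc_def by simp


lemma dmax_trunc_le_dmax: "ennreal (dmax_trunc N x) \<le> dmax x"
  unfolding dmax_trunc_def ennreal_enn2real_if by auto

lemma dmax_trunc_eq:
  assumes "0 \<le> N"
  shows "dmax_trunc N x = (if dmax x \<le> ennreal N then enn2real (dmax x) else N)"
  unfolding dmax_trunc_def using assms by (auto simp: min_def)

lemma dmax_trunc_le: "0 \<le> N \<Longrightarrow> dmax_trunc N x \<le> N"
  by (cases "dmax x") (auto simp: dmax_trunc_eq top_unique)

lemma less_dmax_trunc_iff:
  assumes "0 \<le> t" "t < N"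
  shows "t < dmax_trunc N x \<longleftrightarrow> ennreal t < dmax x"
  using assms by (cases "dmax x") (auto simp: dmax_trunc_eq ennreal_less_iff ennreal_lessI top_unique)

lemma min_le_dmax_trunc:
  assumes "ennreal (w x) \<le> dmax x" "0 \<le> N"
  shows "min (w x) N \<le> dmax_trunc N x"
  using assms w_nonneg[of x] by (cases "dmax x") (auto simp: dmax_trunc_eq top_unique)

lemma trunc_superlevel_borel [measurable]: "trunc_superlevel N \<in> borel_measurable borel"
  unfolding trunc_superlevel_def[abs_def]
  by (rule nn_integral_superlevel_measurable[OF sigma_finite_MK]) simp_all

lemma nn_integral_trunc_superlevel:
  assumes t: "0 \<le> t" "t < N" and h: "h \<in> borel_measurable borel"
  shows "(\<integral>\<^sup>+x. indicator {x. t < dmax_trunc N x} x * (h x * indicator Kcore x) \<partial>MK)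
    = (\<integral>\<^sup>+x. h x * indicator {x\<in>Kcore. ennreal t < dmax x} x \<partial>M)"
proof -
  have "indicator {x. t < dmax_trunc N x} x * (h x * indicator Kcore x)
      = h x * indicator {x\<in>Kcore. ennreal t < dmax x} x" for x
    using less_dmax_trunc_iff[OF t, of x] by (auto simp: indicator_def)
  then show ?thesis using Kcore_subset h by (simp add: nn_integral_MK_indicator subset_iff)
qed

lemma trunc_superlevel_eq:
  assumes "0 \<le> t" "t < N"
  shows "trunc_superlevel N t = emeasure M {x\<in>Kcore. ennreal t < dmax x}"
  using nn_integral_trunc_superlevel[OF assms, of "\<lambda>_. 1"] sets_M
  by (simp add: trunc_superlevel_def)

lemma trunc_superlevel_vanishes:
  assumes "N \<le> t" "0 \<le> N"
  shows "indicator {x. t < dmax_trunc N x} x = (0::ennreal)"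
  using dmax_trunc_le[OF assms(2), of x] assms by (simp add: indicator_def)

lemma nn_integral_w_trunc_superlevel_le:
  assumes root: "avg 0 0 \<le> ennreal t" and t: "0 \<le> t" and N: "0 \<le> N"
  shows "(\<integral>\<^sup>+x. indicator {x. t < dmax_trunc N x} x * (ennreal (w x) * indicator Kcore x) \<partial>MK)
    \<le> ennreal 1 * ennreal (2 * t) * trunc_superlevel N t"
proof (cases "t < N")
  case True
  then show ?thesis
    using nn_integral_w_superlevel_le[OF root t]
    by (simp add: nn_integral_trunc_superlevel t trunc_superlevel_eq)
qed (use trunc_superlevel_vanishes N in simp)

lemma nn_integral_trunc_trunc_superlevel_le:
  assumes root: "avg 0 0 \<le> ennreal t" and t: "0 \<le> t" and N: "0 \<le> N"
    and fin: "wmeas M w K < \<infinity>"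
  shows "(\<integral>\<^sup>+x. indicator {x. t < dmax_trunc N x} x * (ennreal (dmax_trunc N x) * indicator Kcore x) \<partial>MK)
    \<le> FW_Ainf M w * ennreal (2 * t) * trunc_superlevel N t"
proof (cases "t < N")
  case True
  have "(\<integral>\<^sup>+x. ennreal (dmax_trunc N x) * indicator {x\<in>Kcore. ennreal t < dmax x} x \<partial>M)
      \<le> (\<integral>\<^sup>+x. dmax x * indicator {x\<in>Kcore. ennreal t < dmax x} x \<partial>M)"
    by (intro nn_integral_mono mult_right_mono dmax_trunc_le_dmax) simp
  also have "\<dots> \<le> FW_Ainf M w * ennreal (2 * t) * emeasure M {x\<in>Kcore. ennreal t < dmax x}"
    by (rule nn_integral_dmax_superlevel_le[OF root t fin])
  finally show ?thesis
    by (simp add: nn_integral_trunc_superlevel t True trunc_superlevel_eq)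
qed (use trunc_superlevel_vanishes N in simp)

lemma nn_integral_trunc_le_FW_Ainf:
  assumes pos: "0 < wmeas M w K" and fin: "wmeas M w K < \<infinity>"
  shows "(\<integral>\<^sup>+x. ennreal (dmax_trunc N x) * indicator Kcore x \<partial>MK) \<le> FW_Ainf M w * wmeas M w K"
proof -
  have "(\<integral>\<^sup>+x. ennreal (dmax_trunc N x) * indicator Kcore x \<partial>MK)
      = (\<integral>\<^sup>+x. ennreal (dmax_trunc N x) * indicator Kcore x \<partial>M)"
    using Kcore_subset by (intro nn_integral_MK_indicator) auto
  also have "\<dots> \<le> (\<integral>\<^sup>+x\<in>K. maxfun M (\<lambda>y. w y * indicator K y) x \<partial>M)"
    using dmax_trunc_le_dmax dmax_le_maxfun Kcore_subset
    by (intro nn_integral_mono) (auto simp: indicator_def intro: order_trans)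
  also have "\<dots> \<le> FW_Ainf M w * wmeas M w K"
    using pos fin by (intro nn_integral_maxfun_le_FW_Ainf) (simp add: K_def)
  finally show ?thesis .
qed

definition "trunc_layers a N p =
  (\<integral>\<^sup>+t. (ennreal ((1 + p) * t powr p) * indicator {a..N} t) * trunc_superlevel N t \<partial>lborel)"

lemma nn_integral_layer_le:
  fixes h :: "real \<Rightarrow> ennreal"
  assumes a: "0 < a" and p: "0 < p" and c: "0 \<le> c"
    and h [measurable]: "h \<in> borel_measurable borel"
    and level: "\<And>t. t \<in> {a..N} \<Longrightarrow>
      (\<integral>\<^sup>+x. indicator {x. t < dmax_trunc N x} x * h x \<partial>MK) \<le> ennreal c * ennreal (2 * t) * trunc_superlevel N t"
  shows "(\<integral>\<^sup>+x. (\<integral>\<^sup>+t. ennreal (p * t powr (p - 1)) * indicator {a..N} t * indicator {t. t < dmax_trunc N x} t \<partial>lborel) * h x \<partial>MK)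
    \<le> ennreal (2 * c * p / (1 + p)) * trunc_layers a N p"
proof -
  define phi where "phi t = ennreal (p * t powr (p - 1)) * indicator {a..N} t" for t
  have [measurable]: "phi \<in> borel_measurable borel" unfolding phi_def by measurable
  have "(\<integral>\<^sup>+x. (\<integral>\<^sup>+t. phi t * indicator {t. t < dmax_trunc N x} t \<partial>lborel) * h x \<partial>MK)
      = (\<integral>\<^sup>+t. phi t * (\<integral>\<^sup>+x. indicator {x. t < dmax_trunc N x} x * h x \<partial>MK) \<partial>lborel)"
    by (rule nn_integral_layer_swap[OF sigma_finite_MK]) simp_all
  also have "\<dots> \<le> (\<integral>\<^sup>+t. phi t * (ennreal c * ennreal (2 * t) * trunc_superlevel N t) \<partial>lborel)"
  proof (intro nn_integral_mono)
    fix t :: real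
    show "phi t * (\<integral>\<^sup>+x. indicator {x. t < dmax_trunc N x} x * h x \<partial>MK)
        \<le> phi t * (ennreal c * ennreal (2 * t) * trunc_superlevel N t)"
      by (cases "t \<in> {a..N}") (simp_all add: phi_def level mult_left_mono)
  qed
  also have "\<dots> = (\<integral>\<^sup>+t. ennreal (2 * c * p / (1 + p)) *
      ((ennreal ((1 + p) * t powr p) * indicator {a..N} t) * trunc_superlevel N t) \<partial>lborel)"
  proof (intro nn_integral_cong)
    fix t :: real
    show "phi t * (ennreal c * ennreal (2 * t) * trunc_superlevel N t) = ennreal (2 * c * p / (1 + p)) *
        ((ennreal ((1 + p) * t powr p) * indicator {a..N} t) * trunc_superlevel N t)"
    proof (cases "t \<in> {a..N}")
      case True
      then have "0 < t" using a by auto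
      have "phi t * (ennreal c * ennreal (2 * t) * trunc_superlevel N t)
          = (ennreal (p * t powr (p - 1)) * (ennreal c * ennreal (2 * t))) * trunc_superlevel N t"
        using True by (simp add: phi_def mult.assoc)
      also have "\<dots> = (ennreal (2 * c * p / (1 + p)) * ennreal ((1 + p) * t powr p)) * trunc_superlevel N t"
        by (simp only: ennreal_layer_weight_eq[OF \<open>0 < t\<close> p c])
      finally show ?thesis using True by (simp add: mult.assoc)
    qed (simp add: phi_def)
  qed
  also have "\<dots> = ennreal (2 * c * p / (1 + p)) * trunc_layers a N p"
    unfolding trunc_layers_def by (rule nn_integral_cmult) simp
  finally show ?thesis by (simp add: phi_def)
qed

lemma nn_integral_trunc_powr_le:
  fixes h :: "real \<Rightarrow> ennreal"
  assumes a: "0 < a" and N: "a \<le> N" and p: "0 < p" and c: "0 \<le> c"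
    and h [measurable]: "h \<in> borel_measurable borel"
    and level: "\<And>t. t \<in> {a..N} \<Longrightarrow>
      (\<integral>\<^sup>+x. indicator {x. t < dmax_trunc N x} x * h x \<partial>MK) \<le> ennreal c * ennreal (2 * t) * trunc_superlevel N t"
  shows "(\<integral>\<^sup>+x. ennreal (dmax_trunc N x powr p) * h x \<partial>MK)
    \<le> ennreal (a powr p) * (\<integral>\<^sup>+x. h x \<partial>MK) + ennreal (2 * c * p / (1 + p)) * trunc_layers a N p"
proof -
  define I where "I x = (\<integral>\<^sup>+t. ennreal (p * t powr (p - 1)) * indicator {a..N} t
    * indicator {t. t < dmax_trunc N x} t \<partial>lborel)" for x
  have trunc_le: "dmax_trunc N x \<le> N" for x using a N by (intro dmax_trunc_le) simp
  have "I x = (if a < dmax_trunc N x then ennreal (dmax_trunc N x powr p - a powr p) else 0)" for x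
    unfolding I_def using nn_integral_powr_derivative_below[OF a p trunc_le] by simp
  then have [measurable]: "I \<in> borel_measurable borel"
    by (simp cong: measurable_cong)
  have "(\<integral>\<^sup>+x. ennreal (dmax_trunc N x powr p) * h x \<partial>MK) \<le> (\<integral>\<^sup>+x. ennreal (a powr p) * h x + I x * h x \<partial>MK)"
    using ennreal_powr_le_layer_cake[OF a p dmax_trunc_nonneg trunc_le]
    by (intro nn_integral_mono) (simp add: I_def mult_right_mono flip: distrib_right)
  also have "\<dots> = ennreal (a powr p) * (\<integral>\<^sup>+x. h x \<partial>MK) + (\<integral>\<^sup>+x. I x * h x \<partial>MK)"
    by (simp add: nn_integral_add nn_integral_cmult borel_measurable_MK)
  also have "(\<integral>\<^sup>+x. I x * h x \<partial>MK) \<le> ennreal (2 * c * p / (1 + p)) * trunc_layers a N p"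
    unfolding I_def by (rule nn_integral_layer_le[OF a p c h level])
  finally show ?thesis by (simp add: add_left_mono)
qed

lemma trunc_power_le:
  assumes a: "0 < a" "avg 0 0 \<le> ennreal a" and N: "a \<le> N" and p: "0 < p"
    and C: "0 \<le> C" "FW_Ainf M w = ennreal C" and pos: "0 < wmeas M w K" and fin: "wmeas M w K < \<infinity>"
  shows "(\<integral>\<^sup>+x. ennreal (dmax_trunc N x powr (1 + p)) * indicator Kcore x \<partial>MK)
    \<le> ennreal (a powr p) * (ennreal C * wmeas M w K) + ennreal (2 * C * p / (1 + p)) * trunc_layers a N p"
proof -
  have "ennreal (dmax_trunc N x powr (1 + p)) * indicator Kcore x
      = ennreal (dmax_trunc N x powr p) * (ennreal (dmax_trunc N x) * indicator Kcore x)" for x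
    using dmax_trunc_nonneg[of N x] by (simp add: ennreal_mult' mult_ac flip: powr_mult_base)
  then have "(\<integral>\<^sup>+x. ennreal (dmax_trunc N x powr (1 + p)) * indicator Kcore x \<partial>MK)
      \<le> ennreal (a powr p) * (\<integral>\<^sup>+x. ennreal (dmax_trunc N x) * indicator Kcore x \<partial>MK)
        + ennreal (2 * C * p / (1 + p)) * trunc_layers a N p"
  proof (simp only:, intro nn_integral_trunc_powr_le[OF a(1) N p C(1)])
    fix t assume t: "t \<in> {a..N}"
    then show "(\<integral>\<^sup>+x. indicator {x. t < dmax_trunc N x} x * (ennreal (dmax_trunc N x) * indicator Kcore x) \<partial>MK)
        \<le> ennreal C * ennreal (2 * t) * trunc_superlevel N t"
      using a N fin C(2) order_trans[OF a(2), of "ennreal t"]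
      by (intro nn_integral_trunc_trunc_superlevel_le[of t N, simplified C(2)]) auto
  qed simp
  also have "\<dots> \<le> ennreal (a powr p) * (ennreal C * wmeas M w K) + ennreal (2 * C * p / (1 + p)) * trunc_layers a N p"
    using nn_integral_trunc_le_FW_Ainf[OF pos fin, of N] C(2)
    by (intro add_right_mono mult_left_mono) auto
  finally show ?thesis .
qed

lemma trunc_layers_le:
  assumes a: "0 < a" and N: "a \<le> N" and p: "0 < p"
  shows "trunc_layers a N p \<le> (\<integral>\<^sup>+x. ennreal (dmax_trunc N x powr (1 + p)) * indicator Kcore x \<partial>MK)"
proof -
  have "trunc_layers a N p = (\<integral>\<^sup>+x. (\<integral>\<^sup>+t. (ennreal ((1 + p) * t powr p) * indicator {a..N} t)
      * indicator {t. t < dmax_trunc N x} t \<partial>lborel) * indicator Kcore x \<partial>MK)"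
    unfolding trunc_layers_def trunc_superlevel_def
    by (rule nn_integral_layer_swap[OF sigma_finite_MK, symmetric]) simp_all
  also have "\<dots> \<le> (\<integral>\<^sup>+x. ennreal (dmax_trunc N x powr (1 + p)) * indicator Kcore x \<partial>MK)"
    using layer_cake_le_ennreal_powr[OF a p dmax_trunc_le] a N
    by (intro nn_integral_mono mult_right_mono) simp_all
  finally show ?thesis .
qed

lemma weighted_trunc_le:
  assumes a: "0 < a" "avg 0 0 \<le> ennreal a" and N: "a \<le> N" and p: "0 < p"
  shows "(\<integral>\<^sup>+x. ennreal (w x * dmax_trunc N x powr p) * indicator Kcore x \<partial>MK)
    \<le> ennreal (a powr p) * wmeas M w K + ennreal (2 * p / (1 + p)) * trunc_layers a N p"
proof -
  have "ennreal (w x * dmax_trunc N x powr p) * indicator Kcore x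
      = ennreal (dmax_trunc N x powr p) * (ennreal (w x) * indicator Kcore x)" for x
    using w_nonneg[of x] by (simp add: ennreal_mult' mult_ac)
  moreover have "(\<integral>\<^sup>+x. ennreal (w x) * indicator Kcore x \<partial>MK) = wmeas M w Kcore"
    unfolding wmeas_def using Kcore_subset by (intro nn_integral_MK_indicator) auto
  moreover have "(\<integral>\<^sup>+x. ennreal (dmax_trunc N x powr p) * (ennreal (w x) * indicator Kcore x) \<partial>MK)
      \<le> ennreal (a powr p) * (\<integral>\<^sup>+x. ennreal (w x) * indicator Kcore x \<partial>MK)
        + ennreal (2 * 1 * p / (1 + p)) * trunc_layers a N p"
  proof (intro nn_integral_trunc_powr_le[OF a(1) N p])
    fix t assume t: "t \<in> {a..N}"
    then show "(\<integral>\<^sup>+x. indicator {x. t < dmax_trunc N x} x * (ennreal (w x) * indicator Kcore x) \<partial>MK)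
        \<le> ennreal 1 * ennreal (2 * t) * trunc_superlevel N t"
      using a N order_trans[OF a(2), of "ennreal t"]
      by (intro nn_integral_w_trunc_superlevel_le) auto
  qed simp_all
  ultimately show ?thesis by (simp add: wmeas_Kcore)
qed

lemma trunc_power_finite:
  assumes "0 \<le> q" "0 \<le> N"
  shows "(\<integral>\<^sup>+x. ennreal (dmax_trunc N x powr q) * indicator Kcore x \<partial>MK) < \<infinity>"
proof -
  have "(\<integral>\<^sup>+x. ennreal (dmax_trunc N x powr q) * indicator Kcore x \<partial>MK)
      \<le> (\<integral>\<^sup>+x. ennreal (N powr q) * indicator Kcore x \<partial>MK)"
    using dmax_trunc_nonneg dmax_trunc_le[OF assms(2)] assms
    by (intro nn_integral_mono mult_right_mono ennreal_leI powr_mono2) auto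
  also have "\<dots> = ennreal (N powr q) * emeasure MK Kcore"
    by (rule nn_integral_cmult_indicator) simp
  also have "\<dots> < \<infinity>"
    using emeasure_MK[of Kcore] Kcore_subset emeasure_Kcore
    by (simp add: Int_absorb2 ennreal_mult_less_top)
  finally show ?thesis .
qed

lemma weighted_trunc_le_twice:
  assumes a: "0 < a" "avg 0 0 \<le> ennreal a" and N: "a \<le> N" and p: "0 < p"
    and C: "0 \<le> C" "FW_Ainf M w = ennreal C" and pC: "4 * C * p < 1 + p"
    and W: "wmeas M w K = ennreal W" "0 < W"
  shows "(\<integral>\<^sup>+x. ennreal (w x * dmax_trunc N x powr p) * indicator Kcore x \<partial>MK)
    \<le> ennreal (2 * a powr p * W)"
proof -
  define Phi where "Phi = (\<integral>\<^sup>+x. ennreal (dmax_trunc N x powr (1 + p)) * indicator Kcore x \<partial>MK)"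
  have "Phi < \<infinity>" unfolding Phi_def using a N p by (intro trunc_power_finite) auto
  then obtain z where z: "trunc_layers a N p = ennreal z" "0 \<le> z"
    using trunc_layers_le[OF a(1) N p] by (cases "trunc_layers a N p") (auto simp: Phi_def top_unique)
  have "ennreal z \<le> Phi"
    using trunc_layers_le[OF a(1) N p] z by (simp add: Phi_def)
  also have "\<dots> \<le> ennreal (a powr p) * (ennreal C * ennreal W) + ennreal (2 * C * p / (1 + p)) * ennreal z"
    using trunc_power_le[OF a N p C] W z by (simp add: Phi_def)
  also have "\<dots> = ennreal (a powr p * W * C) + ennreal ((2 * C * p / (1 + p)) * z)"
  proof -
    have "ennreal (a powr p) * (ennreal C * ennreal W) = ennreal (a powr p * W * C)"
      using C W by (simp add: ennreal_mult mult_ac)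
    moreover have "ennreal (2 * C * p / (1 + p)) * ennreal z = ennreal ((2 * C * p / (1 + p)) * z)"
      using C z p by (intro ennreal_mult[symmetric]) auto
    ultimately show ?thesis by (simp only:)
  qed
  also have "\<dots> = ennreal (a powr p * W * C + (2 * C * p / (1 + p)) * z)"
    using C W z p by (intro ennreal_plus[symmetric]) auto
  finally have "z \<le> a powr p * W * C + (2 * C * p / (1 + p)) * z"
    using C W z p by (subst (asm) ennreal_le_iff) (auto intro!: add_nonneg_nonneg)
  then have absorbed: "a powr p * W + (2 * p / (1 + p)) * z \<le> 2 * (a powr p * W)"
    using W by (intro absorb_layer_bound[OF p C(1) pC _ z(2)]) simp_all
  have "(\<integral>\<^sup>+x. ennreal (w x * dmax_trunc N x powr p) * indicator Kcore x \<partial>MK)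
      \<le> ennreal (a powr p) * ennreal W + ennreal (2 * p / (1 + p)) * ennreal z"
    using weighted_trunc_le[OF a N p] W z by simp
  also have "\<dots> = ennreal (a powr p * W) + ennreal ((2 * p / (1 + p)) * z)"
  proof -
    have "ennreal (a powr p) * ennreal W = ennreal (a powr p * W)"
      using W by (intro ennreal_mult[symmetric]) auto
    moreover have "ennreal (2 * p / (1 + p)) * ennreal z = ennreal ((2 * p / (1 + p)) * z)"
      using z p by (intro ennreal_mult[symmetric]) auto
    ultimately show ?thesis by (simp only:)
  qed
  also have "\<dots> = ennreal (a powr p * W + (2 * p / (1 + p)) * z)"
    using W z p by (intro ennreal_plus[symmetric]) auto
  also have "\<dots> \<le> ennreal (2 * a powr p * W)"
    using absorbed by (intro ennreal_leI) (simp add: mult.assoc)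
  finally show ?thesis .
qed

lemma nn_integral_w_min_powr_le:
  assumes a: "0 < a" "avg 0 0 \<le> ennreal a" and N: "a \<le> N" and p: "0 < p"
    and C: "0 \<le> C" "FW_Ainf M w = ennreal C" and pC: "4 * C * p < 1 + p"
    and W: "wmeas M w K = ennreal W" "0 < W"
  shows "(\<integral>\<^sup>+x. ennreal (w x * min (w x) N powr p) * indicator Kcore x \<partial>M) \<le> ennreal (2 * a powr p * W)"
proof -
  have "(\<integral>\<^sup>+x. ennreal (w x * min (w x) N powr p) * indicator Kcore x \<partial>M)
      \<le> (\<integral>\<^sup>+x. ennreal (w x * dmax_trunc N x powr p) * indicator Kcore x \<partial>M)"
  proof (intro nn_integral_mono_AE, use w_le_dmax_AE in \<open>elim AE_mp, intro AE_I2 impI\<close>)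
    fix x assume "x \<in> Kcore \<longrightarrow> ennreal (w x) \<le> dmax x"
    then have "x \<in> Kcore \<Longrightarrow> min (w x) N powr p \<le> dmax_trunc N x powr p"
      using min_le_dmax_trunc[of x N] a N p w_nonneg[of x] by (intro powr_mono2) auto
    then show "ennreal (w x * min (w x) N powr p) * indicator Kcore x
        \<le> ennreal (w x * dmax_trunc N x powr p) * indicator Kcore x"
      using w_nonneg[of x] by (auto simp: indicator_def intro!: ennreal_leI mult_left_mono)
  qed
  also have "\<dots> = (\<integral>\<^sup>+x. ennreal (w x * dmax_trunc N x powr p) * indicator Kcore x \<partial>MK)"
    using Kcore_subset by (intro nn_integral_MK_indicator[symmetric]) auto
  also have "\<dots> \<le> ennreal (2 * a powr p * W)"
    by (rule weighted_trunc_le_twice[OF a N p C pC W])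
  finally show ?thesis .
qed

lemma nn_integral_w_powr_le:
  assumes p: "0 < p" and C: "0 \<le> C" "FW_Ainf M w = ennreal C" and pC: "4 * C * p < 1 + p"
    and W: "wmeas M w K = ennreal W" "0 < W"
  shows "(\<integral>\<^sup>+x. ennreal (w x powr (1 + p)) * indicator K x \<partial>M) \<le> ennreal (2 * (W / m) powr p * W)"
proof -
  define a where "a = W / m"
  have a: "0 < a" "avg 0 0 \<le> ennreal a"
    using W m_pos unfolding a_def avg_root by (simp_all add: divide_ennreal)
  define f where "f = (\<lambda>n x. ennreal (w x * min (w x) (a + real n) powr p) * indicator Kcore x)"
  have "incseq f"
    using p a w_nonneg
    by (intro incseq_SucI le_funI) (auto simp: f_def indicator_def intro!: ennreal_leI mult_left_mono powr_mono2)
  moreover have "(SUP n. f n x) = ennreal (w x powr (1 + p)) * indicator Kcore x" for x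
  proof -
    obtain n :: nat where "w x \<le> real n" using real_arch_simple by blast
    then have "eventually (\<lambda>n. f n x = ennreal (w x powr (1 + p)) * indicator Kcore x) sequentially"
      using a w_nonneg[of x]
      by (intro eventually_sequentiallyI[of n]) (auto simp: f_def powr_mult_base)
    moreover have "incseq (\<lambda>n. f n x)" using \<open>incseq f\<close> by (auto simp: incseq_def le_fun_def)
    ultimately show ?thesis
      by (metis LIMSEQ_SUP LIMSEQ_unique tendsto_eventually)
  qed
  ultimately have "(\<integral>\<^sup>+x. ennreal (w x powr (1 + p)) * indicator Kcore x \<partial>M) = (SUP n. integral\<^sup>N M (f n))"
    by (subst nn_integral_monotone_convergence_SUP[symmetric]) (simp_all add: f_def borel_measurable_M)
  also have "\<dots> \<le> ennreal (2 * a powr p * W)"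
    using nn_integral_w_min_powr_le[OF a _ p C pC W] a by (intro SUP_least) (simp add: f_def)
  finally show ?thesis
    by (simp add: a_def mult.assoc flip: nn_integral_Kcore_eq_K)
qed

lemma reverse_hoelder_K:
  assumes Ainf: "FW_Ainf M w < \<infinity>" and p: "0 < p" and pC: "4 * enn2real (FW_Ainf M w) * p < 1 + p"
  shows "(\<integral>\<^sup>+x. ennreal (w x powr (1 + p)) * indicator K x \<partial>M) / emeasure M K
    \<le> 2 * enn_powr (wmeas M w K / emeasure M K) (1 + p)"
proof (cases "wmeas M w K")
  case (real W)
  show ?thesis
  proof (cases "W = 0")
    case True
    then have "AE x in M. ennreal (w x) * indicator K x = 0"
      using real by (simp add: wmeas_def nn_integral_0_iff_AE borel_measurable_M)
    moreover have "ennreal (w x powr (1 + p)) * indicator K x = 0"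
      if "ennreal (w x) * indicator K x = 0" for x
      using that w_nonneg[of x] by (auto simp: indicator_def split: if_splits)
    ultimately have "AE x in M. ennreal (w x powr (1 + p)) * indicator K x = 0"
      by (elim AE_mp) (auto intro!: AE_I2)
    then have "(\<integral>\<^sup>+x. ennreal (w x powr (1 + p)) * indicator K x \<partial>M) = 0"
      by (subst nn_integral_0_iff_AE) (simp_all add: borel_measurable_M)
    then show ?thesis by simp
  next
    case False
    with real have W: "wmeas M w K = ennreal W" "0 < W" by simp_all
    have "(\<integral>\<^sup>+x. ennreal (w x powr (1 + p)) * indicator K x \<partial>M) / emeasure M K
        \<le> ennreal (2 * (W / m) powr p * W) / ennreal m"
      unfolding emeasure_K using Ainf
      by (intro divide_right_mono_ennreal nn_integral_w_powr_le[OF p _ _ pC W]) (auto simp: less_top)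
    also have "\<dots> = ennreal (2 * (W / m) powr (1 + p))"
      using W m_pos by (simp add: divide_ennreal powr_mult_base[symmetric])
    finally show ?thesis
      using W m_pos by (simp add: emeasure_K enn_powr_def divide_ennreal ennreal_mult)
  qed
next
  case top
  then show ?thesis using m_pos by (simp add: emeasure_K ennreal_top_divide enn_powr_def)
qed

end

lemma bounded_interval_AE_Icc:
  fixes M :: "real measure" and I :: "real set"
  assumes M: "sets M = sets borel" "\<And>x. emeasure M {x} = 0"
    and I: "is_interval I" "bounded I" "0 < emeasure M I"
  obtains l r where "l < r" "AE x in M. x \<in> I \<longleftrightarrow> x \<in> {l..r}"
proof -
  have "I \<noteq> {}" using I(3) by auto
  define l r where "l = Inf I" and "r = Sup I"
  have bdd: "bdd_below I" "bdd_above I" using I(2) by (auto intro: bounded_imp_bdd_below bounded_imp_bdd_above)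
  have "I \<subseteq> {l..r}"
    unfolding l_def r_def using bdd by (auto intro: cInf_lower cSup_upper)
  moreover have "{l<..<r} \<subseteq> I"
  proof
    fix x assume "x \<in> {l<..<r}"
    then obtain a b where "a \<in> I" "a < x" "b \<in> I" "x < b"
      using cInf_less_iff[OF \<open>I \<noteq> {}\<close> bdd(1)] less_cSup_iff[OF \<open>I \<noteq> {}\<close> bdd(2)]
      by (auto simp: l_def r_def)
    then show "x \<in> I" using I(1) unfolding is_interval_1 by (meson less_imp_le)
  qed
  ultimately have diff: "{x. (x \<in> I) \<noteq> (x \<in> {l..r})} \<subseteq> {l, r}"
    by (auto simp: subset_iff)
  have "{l, r} = {l} \<union> {r}" by auto
  then have "{l, r} \<in> null_sets M"
    using emeasure_subadditive[of "{l}" M "{r}"] M by (simp add: null_sets_def)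
  then have AE: "AE x in M. x \<in> I \<longleftrightarrow> x \<in> {l..r}"
    using diff by (intro AE_I') auto
  have "l < r"
  proof (rule ccontr)
    assume "\<not> l < r"
    then have "I \<subseteq> {l, r}" using \<open>I \<subseteq> {l..r}\<close> by auto
    then have "emeasure M I \<le> emeasure M {l, r}"
      using M real_interval_borel_measurable[OF I(1)] by (intro emeasure_mono) auto
    then show False using \<open>{l, r} \<in> null_sets M\<close> I(3) by auto
  qed
  then show ?thesis using AE by (rule that)
qed

theorem theorem4p1:
  fixes M :: "real measure" and w :: "real \<Rightarrow> real" and \<epsilon> :: real and I :: "real set"
  assumes borel: "sets M = sets borel"
    and radon: "\<And>K. compact K \<Longrightarrow> emeasure M K < \<infinity>"
    and nonatomic: "\<And>x. emeasure M {x} = 0"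
    and w_meas: "w \<in> borel_measurable M"
    and w_nonneg: "\<And>x. 0 \<le> w x"
    and Ainf_fin: "FW_Ainf M w < \<infinity>"
    and eps_pos: "0 < \<epsilon>"
    and eps_small: "\<epsilon> < 1 / (4 * enn2real (FW_Ainf M w) - 1)"
    and I_int: "is_interval I" and I_bdd: "bounded I"
    and I_pos: "0 < emeasure M I"
  shows "(\<integral>\<^sup>+ x\<in>I. ennreal (w x powr (1 + \<epsilon>)) \<partial>M) / emeasure M I
           \<le> 2 * enn_powr ((\<integral>\<^sup>+ x\<in>I. ennreal (w x) \<partial>M) / emeasure M I) (1 + \<epsilon>)"
proof -
  obtain l r where lr: "l < r" and AE: "AE x in M. x \<in> I \<longleftrightarrow> x \<in> {l..r}"
    using bounded_interval_AE_Icc[OF borel nonatomic I_int I_bdd I_pos] .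
  have int_I: "(\<integral>\<^sup>+x\<in>I. f x \<partial>M) = (\<integral>\<^sup>+x\<in>{l..r}. f x \<partial>M)" for f :: "real \<Rightarrow> ennreal"
    using AE by (intro nn_integral_cong_AE) (auto simp: indicator_def)
  have meas_I: "emeasure M I = emeasure M {l..r}"
    using AE borel real_interval_borel_measurable[OF I_int] by (intro emeasure_eq_AE) auto
  interpret weighted_quantile_grid M l r w
    using borel nonatomic lr radon[of "{l..r}"] I_pos meas_I w_meas w_nonneg
    by unfold_locales auto
  have "4 * enn2real (FW_Ainf M w) * \<epsilon> < 1 + \<epsilon>"
  proof (cases "4 * enn2real (FW_Ainf M w) \<le> 1")
    case True
    then have "4 * enn2real (FW_Ainf M w) * \<epsilon> \<le> 1 * \<epsilon>" using eps_pos by (intro mult_right_mono) auto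
    then show ?thesis using eps_pos by linarith
  next
    case False
    then show ?thesis using eps_small by (simp add: less_divide_eq algebra_simps)
  qed
  then show ?thesis
    using reverse_hoelder_K[OF Ainf_fin eps_pos] by (simp add: int_I meas_I wmeas_def K_def)
qed

end
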